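(* Let $m\ge1$ and $\alpha,\beta^1,\dots,\beta^m\in\mathrm{ord}$. If $\alpha<\beta^1,\dots,\beta^m$, then $\alpha\le\beta^1,\dots,\beta^m$.
   Context: Work constructively. Let $\mathfrak F$ be a set of index sets containing $\mathbb N$ and each $\mathbb N_k=\{n\in\mathbb N:n<k\}$ ($k\ge0$), closed (up to isomorphism) under finitely enumerated subsets, sets of finitely enumerated subsets, and disjoint unions indexed by elements of $\mathfrak F$. A finitely enumerated subset of $A$ is one given by a map $\mathbb N_k\to A$; write $F\subseteq_f I$. The set $\mathrm{ord}$ is inductively generated by $\underline 0$ and, for every family $(\alpha_i)_{i\in I}$ with $I\in\mathfrak F$, $\alpha_i\in\mathrm{ord}$, an element $\mathrm S(\alpha_i)_{i\in I}$; for such $\alpha$, $I_\alpha=I$ and $\alpha_i$ are its definitional subordinals; $I_{\underline 0}=\emptyset$. For a finite list $F$ in $I_\alpha$, $\alpha_F$ is the list of the $\alpha_i$, $i\in F$. Relations between an element and a nonempty finite list, by simultaneous induction: $\alpha\le\beta^1,\dots,\beta^m$ means $\alpha_i<\beta^1,\dots,\beta^m$ for all $i\in I_\alpha$; $\alpha<\beta^1,\dots,\beta^m$ means there exist $F_1\subseteq_f I_{\beta^1},\dots,F_m\subseteq_f I_{\beta^m}$, not all empty, with $\alpha\le\beta^1_{F_1},\dots,\beta^m_{F_m}$ (concatenated list). *)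

theory Defs
  imports Main
begin

text \<open>Index sets are subsets of a fixed ambient type 'i. An ordinal S(alpha_i)_{i in I}
  is represented by the index set I together with a function g; only the values of g on I
  matter (ordinals are compared only via the relations below).\<close>

datatype 'i ord = OZero | OS "'i set" "'i \<Rightarrow> 'i ord"

fun idx :: "'i ord \<Rightarrow> 'i set" where
  "idx OZero = {}"
| "idx (OS I g) = I"

fun sub :: "'i ord \<Rightarrow> 'i \<Rightarrow> 'i ord" where
  "sub OZero i = OZero"
| "sub (OS I g) i = g i"

text \<open>A finitely enumerated subset F of I is a map N_k -> I, i.e. a list over I.\<close>

definition sublist_sel :: "'i ord list \<Rightarrow> 'i list list \<Rightarrow> 'i ord list" where
  "sublist_sel bs Fs = concat (map (\<lambda>(b, F). map (sub b) F) (zip bs Fs))"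

definition admissible_sel :: "'i ord list \<Rightarrow> 'i list list \<Rightarrow> bool" where
  "admissible_sel bs Fs \<longleftrightarrow> length Fs = length bs
     \<and> (\<forall>j < length bs. set (Fs ! j) \<subseteq> idx (bs ! j))
     \<and> (\<exists>j < length bs. Fs ! j \<noteq> [])"

primrec ord_le :: "'i ord \<Rightarrow> 'i ord list \<Rightarrow> bool" where
  "ord_le OZero bs = True"
| "ord_le (OS I g) bs =
     (\<forall>i\<in>I. \<exists>Fs. admissible_sel bs Fs \<and> ord_le (g i) (sublist_sel bs Fs))"

definition ord_less :: "'i ord \<Rightarrow> 'i ord list \<Rightarrow> bool" where
  "ord_less a bs \<longleftrightarrow> (\<exists>Fs. admissible_sel bs Fs \<and> ord_le a (sublist_sel bs Fs))"

lemma ord_le_OS_unfold: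
  "ord_le (OS I g) bs = (\<forall>i\<in>I. ord_less (g i) bs)"
  by (simp add: ord_less_def)

definition index_family :: "'i set set \<Rightarrow> bool" where
  "index_family \<F> \<longleftrightarrow>
     (\<exists>I\<in>\<F>. \<exists>f. bij_betw f (UNIV :: nat set) I)
   \<and> (\<forall>k::nat. \<exists>I\<in>\<F>. \<exists>f. bij_betw f {..<k} I)
   \<and> (\<forall>I\<in>\<F>. \<forall>F::'i list. set F \<subseteq> I \<longrightarrow> (\<exists>J\<in>\<F>. \<exists>f. bij_betw f {..<length F} J))
   \<and> (\<forall>I\<in>\<F>. \<exists>J\<in>\<F>. \<exists>f. bij_betw f {F::'i list. set F \<subseteq> I} J)
   \<and> (\<forall>I\<in>\<F>. \<forall>J. (\<forall>i\<in>I. J i \<in> \<F>) \<longrightarrow> (\<exists>K\<in>\<F>. \<exists>f. bij_betw f (SIGMA i:I. J i) K))"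

inductive in_ord :: "'i set set \<Rightarrow> 'i ord \<Rightarrow> bool" for \<F> where
  "in_ord \<F> OZero"
| "I \<in> \<F> \<Longrightarrow> (\<forall>i\<in>I. in_ord \<F> (g i)) \<Longrightarrow> in_ord \<F> (OS I g)"

end

theory Submission
  imports Defs
begin

(* Induction on alpha: if alpha <= beta_F for an admissible selection F, then every
   alpha_i < beta_F, i.e. alpha_i <= (beta_F)_G for an admissible G; the induction hypothesis
   gives alpha_i <= beta_F, which is alpha_i < beta witnessed by F.
   Neither the closure conditions on the index family nor membership in ord are needed. *)

lemma ord_le_of_ord_le_sublist_sel:
  assumes "admissible_sel bs Fs" and "ord_le a (sublist_sel bs Fs)"
  shows "ord_le a bs"
  using assms
proof (induction a arbitrary: bs Fs)
  case OZero
  then show ?case by simp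
next
  case (OS I g)
  have "ord_less (g i) bs" if "i \<in> I" for i
  proof -
    from OS.prems(2) that obtain Gs
      where "admissible_sel (sublist_sel bs Fs) Gs"
        and "ord_le (g i) (sublist_sel (sublist_sel bs Fs) Gs)"
      by (auto simp: ord_le_OS_unfold ord_less_def)
    then have "ord_le (g i) (sublist_sel bs Fs)"
      using OS.IH[OF rangeI] by blast
    with OS.prems(1) show ?thesis
      unfolding ord_less_def by blast
  qed
  then show ?case
    unfolding ord_le_OS_unfold by blast
qed

lemma ord_less_imp_ord_le: "ord_less a bs \<Longrightarrow> ord_le a bs"
  unfolding ord_less_def by (blast intro: ord_le_of_ord_le_sublist_sel)

theorem lemma4p3:
  fixes \<F> :: "'i set set" and a :: "'i ord" and bs :: "'i ord list"
  assumes "index_family \<F>"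
    and "in_ord \<F> a"
    and "\<forall>b\<in>set bs. in_ord \<F> b"
    and "bs \<noteq> []"
    and "ord_less a bs"
  shows "ord_le a bs"
  using assms(5) by (rule ord_less_imp_ord_le)

end
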